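(* Let $\Sigma$ be a set of constant symbols with $\star\notin\Sigma$ and $O\in\mathrm{Matr}_\Sigma(\mathcal O)$ an observation. Then $\mathcal L(O)=\{W\in\Sigma^*:\ \text{there exists a tuple }p\text{ of pairwise distinct constants of }\mathbf P\text{ (of length }|W|+1)\text{ such that }O\bar W_p\text{ is nilpotent}\}$.
   Context: Terms: first-order terms built from an infinite set of variables, a binary function symbol $\bullet$ written infix (not associative; by convention right-associating, $t\bullet u\bullet v:=t\bullet(u\bullet v)$), infinitely many constant symbols including a distinguished constant $\star$, and for each $n\ge1$ at least one $n$-ary function symbol. $\mathrm{var}(t)$ is the set of variables of $t$. The height of an occurrence of a variable in $t$ is its distance from the root of the tree of $t$. A renaming is a bijective substitution mapping variables to variables. A flow is a pair of terms written $t\leftarrow u$ with $\mathrm{var}(t)\subseteq\mathrm{var}(u)$, considered up to renaming. The product of flows $u\leftarrow v$ and $t\leftarrow w$ (representatives chosen with disjoint variable sets) is defined iff $v$ and $t$ are unifiable, and then equals $u\theta\leftarrow w\theta$ with $\theta$ a most general unifier of $v,t$. A wiring is a finite set of flows, written as a formal sum, with $0$ the empty wiring; product $FG=\{fg: f\in F,g\in G, fg\text{ defined}\}$, $F^n$ the $n$-fold product. $F$ is nilpotent if $F^n=0$ for some $n\in\mathbb N$. A flow $t\leftarrow u$ is balanced if for every variable $x$, all occurrences of $x$ in $t$ and in $u$ have the same height; $\mathcal B$ is the set of wirings all of whose flows are balanced. A semiring is a set of wirings containing $0$ and closed under finite sums (unions) and products. Tensor product of flows (variables renamed apart): $(u\leftarrow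 v)\otimes(t\leftarrow w):=u\bullet t\leftarrow v\bullet w$; extended to wirings by $(\sum_i f_i)\otimes(\sum_j g_j)=\sum_{i,j}f_i\otimes g_j$, and to semirings by $\mathcal A\otimes\mathcal B=\{\sum_i F_i\otimes G_i: F_i\in\mathcal A,G_i\in\mathcal B\}$, right-associating. For a set $E$ of closed terms, $\mathcal C(E)=\{\sum_i t_i\leftarrow u_i: t_i,u_i\in E\}$. For a set of symbols $\mathbf S$ and semiring $\mathcal A$, $\mathcal R_{\mathbf S}(\mathcal A)$ is the set of wirings of $\mathcal A$ not using symbols of $\mathbf S$. Fix disjoint infinite sets of constants $\mathbf P$ (position constants) and $\mathbf S$ (states), a unary function symbol $\mathrm M$, and constants $\mathrm L,\mathrm R$. The observation semiring is $\mathcal O:=\mathcal C(\mathbf S)\otimes\mathcal R_{\mathbf P}(\mathcal B)$. For a set of constants $\Sigma$ and semiring $\mathcal A$, $\mathrm{Matr}_\Sigma(\mathcal A):=\mathcal C(\Sigma\cup\{\star\})\otimes\mathcal C(\{\mathrm L,\mathrm R\})\otimes\mathcal A$. An observation over $\Sigma$ is any element of $\mathrm{Matr}_\Sigma(\mathcal O)$. Word representation: write $t\rightleftarrows u$ for $t\leftarrow u+u\leftarrow t$. For $W=c_1\cdots c_n$ over $\Sigma$ and pairwise distinct $p=(p_0,\dots,p_n)\in\mathbf P^{n+1}$, set $p_{n+1}=p_0$, $c_0=c_{n+1}=\star$, and, with $x,y$ variables, $\bar W_p=\sum_{i=0}^n\big(c_i\bullet\mathrm L\bullet x\bullet y\bullet\mathrm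 M(p_i)\ \rightleftarrows\ c_{i+1}\bullet\mathrm R\bullet x\bullet y\bullet\mathrm M(p_{i+1})\big)$. The language of $O$ is defined as $\mathcal L(O)=\{W\in\Sigma^*:\ O\bar W_p\text{ is nilpotent for every tuple }p\text{ of pairwise distinct constants of }\mathbf P\text{ of length }|W|+1\}$. *)

theory Defs
  imports Main
begin

text \<open>Constant symbols: the distinguished constant Star, the constants L and R,
  the position constants P (CP n), the states S (CS n), and infinitely many further
  constants (CO n).\<close>
datatype cnst = Star | CL | CR | CP nat | CS nat | CO nat

definition Pconsts :: "cnst set" where "Pconsts = range CP"
definition Sconsts :: "cnst set" where "Sconsts = range CS"

text \<open>Function symbols are identified by a name together with the number of
  arguments they are applied to; so there are infinitely many n-ary symbols for each n.\<close>
datatype trm = Var nat | Dot trm trm | Const cnst | Fn string "trm list"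

fun vars :: "trm \<Rightarrow> nat set" where
  "vars (Var x) = {x}"
| "vars (Dot a b) = vars a \<union> vars b"
| "vars (Const c) = {}"
| "vars (Fn f ts) = \<Union> (set (map vars ts))"

fun constsof :: "trm \<Rightarrow> cnst set" where
  "constsof (Var x) = {}"
| "constsof (Dot a b) = constsof a \<union> constsof b"
| "constsof (Const c) = {c}"
| "constsof (Fn f ts) = \<Union> (set (map constsof ts))"

fun heights :: "trm \<Rightarrow> nat \<Rightarrow> nat set" where
  "heights (Var y) x = (if x = y then {0} else {})"
| "heights (Dot a b) x = Suc ` (heights a x \<union> heights b x)"
| "heights (Const c) x = {}"
| "heights (Fn f ts) x = Suc ` \<Union> (set (map (\<lambda>t. heights t x) ts))"

fun subst :: "(nat \<Rightarrow> trm) \<Rightarrow> trm \<Rightarrow> trm" where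
  "subst \<sigma> (Var x) = \<sigma> x"
| "subst \<sigma> (Dot a b) = Dot (subst \<sigma> a) (subst \<sigma> b)"
| "subst \<sigma> (Const c) = Const c"
| "subst \<sigma> (Fn f ts) = Fn f (map (subst \<sigma>) ts)"

definition renaming :: "(nat \<Rightarrow> trm) \<Rightarrow> bool" where
  "renaming \<rho> \<longleftrightarrow> (\<exists>h. bij h \<and> \<rho> = Var \<circ> h)"

definition is_mgu :: "(nat \<Rightarrow> trm) \<Rightarrow> trm \<Rightarrow> trm \<Rightarrow> bool" where
  "is_mgu \<theta> a b \<longleftrightarrow> subst \<theta> a = subst \<theta> b \<and>
     (\<forall>\<sigma>. subst \<sigma> a = subst \<sigma> b \<longrightarrow> (\<exists>\<delta>. \<forall>x. \<sigma> x = subst \<delta> (\<theta> x)))"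

text \<open>A representative of a flow  t \<leftarrow> u  is the pair (t, u). A flow is the class of
  a representative up to renaming.\<close>
definition is_flowrep :: "trm \<times> trm \<Rightarrow> bool" where
  "is_flowrep p \<longleftrightarrow> vars (fst p) \<subseteq> vars (snd p)"

definition flow_class :: "trm \<Rightarrow> trm \<Rightarrow> (trm \<times> trm) set" where
  "flow_class t u = {(subst \<rho> t, subst \<rho> u) | \<rho>. renaming \<rho>}"

definition is_flow :: "(trm \<times> trm) set \<Rightarrow> bool" where
  "is_flow f \<longleftrightarrow> (\<exists>t u. is_flowrep (t, u) \<and> f = flow_class t u)"

text \<open>A wiring is a finite set of flows; 0 is the empty wiring, sums are unions.\<close>
definition is_wiring :: "(trm \<times> trm) set set \<Rightarrow> bool" where
  "is_wiring F \<longleftrightarrow> finite F \<and> (\<forall>f\<in>F. is_flow f)"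

text \<open>Product of flows (u \<leftarrow> v)(t \<leftarrow> w) = u\<theta> \<leftarrow> w\<theta>, representatives renamed apart,
  theta an mgu of v and t. The product is defined iff this set is nonempty.\<close>
definition flow_prod :: "(trm \<times> trm) set \<Rightarrow> (trm \<times> trm) set \<Rightarrow> (trm \<times> trm) set" where
  "flow_prod f g = {(subst \<theta> u, subst \<theta> w) | u v t w \<theta>.
      (u, v) \<in> f \<and> (t, w) \<in> g \<and> (vars u \<union> vars v) \<inter> (vars t \<union> vars w) = {} \<and> is_mgu \<theta> v t}"

definition wprod :: "(trm \<times> trm) set set \<Rightarrow> (trm \<times> trm) set set \<Rightarrow> (trm \<times> trm) set set" where
  "wprod F G = {flow_prod f g | f g. f \<in> F \<and> g \<in> G \<and> flow_prod f g \<noteq> {}}"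

fun wpow :: "(trm \<times> trm) set set \<Rightarrow> nat \<Rightarrow> (trm \<times> trm) set set" where
  "wpow F 0 = {flow_class (Var 0) (Var 0)}"
| "wpow F (Suc 0) = F"
| "wpow F (Suc (Suc n)) = wprod (wpow F (Suc n)) F"

definition nilpotent :: "(trm \<times> trm) set set \<Rightarrow> bool" where
  "nilpotent F \<longleftrightarrow> (\<exists>n. wpow F n = {})"

definition balanced_rep :: "trm \<times> trm \<Rightarrow> bool" where
  "balanced_rep p \<longleftrightarrow> (\<forall>x. \<exists>k. heights (fst p) x \<union> heights (snd p) x \<subseteq> {k})"

definition Bal :: "(trm \<times> trm) set set set" where
  "Bal = {F. is_wiring F \<and> (\<forall>f\<in>F. \<forall>p\<in>f. balanced_rep p)}"

definition Cw :: "trm set \<Rightarrow> (trm \<times> trm) set set set" where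
  "Cw E = {F. finite F \<and> (\<forall>f\<in>F. \<exists>t u. t \<in> E \<and> u \<in> E \<and> f = flow_class t u)}"

definition ftensor :: "(trm \<times> trm) set \<Rightarrow> (trm \<times> trm) set \<Rightarrow> (trm \<times> trm) set" where
  "ftensor f g = {(Dot u t, Dot v w) | u v t w.
      (u, v) \<in> f \<and> (t, w) \<in> g \<and> (vars u \<union> vars v) \<inter> (vars t \<union> vars w) = {}}"

definition wtensor :: "(trm \<times> trm) set set \<Rightarrow> (trm \<times> trm) set set \<Rightarrow> (trm \<times> trm) set set" where
  "wtensor F G = {ftensor f g | f g. f \<in> F \<and> g \<in> G}"

definition stensor :: "(trm \<times> trm) set set set \<Rightarrow> (trm \<times> trm) set set set \<Rightarrow> (trm \<times> trm) set set set" where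
  "stensor A B = {\<Union> (set (map (\<lambda>(F, G). wtensor F G) xs)) | xs. set xs \<subseteq> A \<times> B}"

text \<open>R_S(A): wirings of A not using symbols of S (here S is a set of constants).\<close>
definition Rsym :: "cnst set \<Rightarrow> (trm \<times> trm) set set set \<Rightarrow> (trm \<times> trm) set set set" where
  "Rsym S A = {F \<in> A. \<forall>f\<in>F. \<forall>p\<in>f. (constsof (fst p) \<union> constsof (snd p)) \<inter> S = {}}"

definition Obs :: "(trm \<times> trm) set set set" where
  "Obs = stensor (Cw (Const ` Sconsts)) (Rsym Pconsts Bal)"

definition Matr :: "cnst set \<Rightarrow> (trm \<times> trm) set set set \<Rightarrow> (trm \<times> trm) set set set" where
  "Matr \<Sigma> A = stensor (Cw (Const ` (\<Sigma> \<union> {Star}))) (stensor (Cw (Const ` {CL, CR})) A)"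

definition Mt :: "cnst \<Rightarrow> trm" where "Mt p = Fn ''M'' [Const p]"

text \<open>c_0 = c_(n+1) = Star, c_i = W_i for 1 \<le> i \<le> n (W_i = W ! (i - 1)).\<close>
definition letter :: "cnst list \<Rightarrow> nat \<Rightarrow> cnst" where
  "letter W i = (if i = 0 \<or> i > length W then Star else W ! (i - 1))"

text \<open>p_i for 0 \<le> i \<le> n, and p_(n+1) = p_0.\<close>
definition pos :: "cnst list \<Rightarrow> nat \<Rightarrow> cnst" where
  "pos p i = (if i < length p then p ! i else p ! 0)"

definition wordrep :: "cnst list \<Rightarrow> cnst list \<Rightarrow> (trm \<times> trm) set set" where
  "wordrep W p = (\<Union>i\<in>{0..length W}.
     (let a = Dot (Const (letter W i)) (Dot (Const CL) (Dot (Var 0) (Dot (Var 1) (Mt (pos p i)))));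
          b = Dot (Const (letter W (Suc i))) (Dot (Const CR) (Dot (Var 0) (Dot (Var 1) (Mt (pos p (Suc i))))))
      in {flow_class a b, flow_class b a}))"

definition lang :: "cnst set \<Rightarrow> (trm \<times> trm) set set \<Rightarrow> cnst list set" where
  "lang \<Sigma> Ob = {W. set W \<subseteq> \<Sigma> \<and>
     (\<forall>p. length p = length W + 1 \<and> distinct p \<and> set p \<subseteq> Pconsts \<longrightarrow> nilpotent (wprod Ob (wordrep W p)))}"

end

theory Submission
  imports Defs "HOL-Combinatorics.Transposition"
begin

(* The inclusion of L(O) in the right-hand side is trivial, since
   tuples of pairwise distinct position constants of every length exist.  For the
   converse, nilpotency of O W_p does not depend on the choice of the tuple p: any two
   such tuples p, q of the same length are related by a permutation pi of the constants
   that fixes every non-position constant (lemma permutation_mapping_list), and pi acts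
   as an automorphism on the relevant flows.  The action renames constants everywhere
   EXCEPT in the head constant of terms of the shape  c . r  (the letters of W may
   themselves be position constants and must stay put).  This "renaming below the
   head" commutes with substitution, preserves most general unifiers, and therefore
   commutes with products and powers of wirings; it fixes every observation (which
   contains no position constants below the head) and maps W_p to W_(pi p). *)

section \<open>Renaming constants in terms\<close>

fun crename :: "(cnst \<Rightarrow> cnst) \<Rightarrow> trm \<Rightarrow> trm" where
  "crename \<pi> (Var x) = Var x"
| "crename \<pi> (Dot a b) = Dot (crename \<pi> a) (crename \<pi> b)"
| "crename \<pi> (Const c) = Const (\<pi> c)"
| "crename \<pi> (Fn f ts) = Fn f (map (crename \<pi>) ts)"

lemma vars_crename [simp]: "vars (crename \<pi> t) = vars t"
  by (induction t) auto

lemma crename_subst: "crename \<pi> (subst \<sigma> t) = subst (crename \<pi> \<circ> \<sigma>) (crename \<pi> t)"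
  by (induction t) auto

lemma crename_comp: "crename \<rho> (crename \<pi> t) = crename (\<rho> \<circ> \<pi>) t"
  by (induction t) auto

lemma crename_fixed: "\<forall>c\<in>constsof t. \<pi> c = c \<Longrightarrow> crename \<pi> t = t"
  by (induction t) (auto simp: map_idI)

lemma crename_id: "crename id t = t"
  by (simp add: crename_fixed)

lemma crename_inv:
  assumes "bij \<pi>"
  shows "crename (inv \<pi>) (crename \<pi> t) = t" "crename \<pi> (crename (inv \<pi>) t) = t"
proof -
  have "inv \<pi> \<circ> \<pi> = id" "\<pi> \<circ> inv \<pi> = id"
    using assms by (simp_all add: bij_is_inj) (metis bij_is_surj surj_iff)
  then show "crename (inv \<pi>) (crename \<pi> t) = t" "crename \<pi> (crename (inv \<pi>) t) = t"
    by (simp_all add: crename_comp crename_id)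
qed

section \<open>Renaming below the head constant\<close>

text \<open>Headed terms have the shape  c . r  with a constant c; all flows in this file
  are built from headed terms.\<close>
definition headed :: "trm \<Rightarrow> bool" where
  "headed t \<longleftrightarrow> (\<exists>c r. t = Dot (Const c) r)"

definition hrename :: "(cnst \<Rightarrow> cnst) \<Rightarrow> trm \<Rightarrow> trm" where
  "hrename \<pi> t = (case t of Dot a r \<Rightarrow> Dot a (crename \<pi> r) | _ \<Rightarrow> t)"

lemma headed_subst [simp]: "headed t \<Longrightarrow> headed (subst \<sigma> t)"
  by (auto simp: headed_def)

lemma headed_hrename [simp]: "headed t \<Longrightarrow> headed (hrename \<pi> t)"
  by (auto simp: headed_def hrename_def)

lemma vars_hrename [simp]: "headed t \<Longrightarrow> vars (hrename \<pi> t) = vars t"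
  by (auto simp: headed_def hrename_def)

text \<open>Since the head of a headed term is closed, the renaming commutes with substitution.\<close>
lemma hrename_subst: "headed t \<Longrightarrow> hrename \<pi> (subst \<sigma> t) = subst (crename \<pi> \<circ> \<sigma>) (hrename \<pi> t)"
  by (auto simp: headed_def hrename_def crename_subst)

lemma hrename_inv:
  assumes "bij \<pi>"
  shows "hrename (inv \<pi>) (hrename \<pi> t) = t" "hrename \<pi> (hrename (inv \<pi>) t) = t"
  using assms by (auto simp: hrename_def crename_inv split: trm.splits)

text \<open>Renaming variables leaves constants untouched.\<close>
lemma hrename_subst_renaming:
  "renaming \<rho> \<Longrightarrow> headed t \<Longrightarrow> hrename \<pi> (subst \<rho> t) = subst \<rho> (hrename \<pi> t)"
proof -
  assume "renaming \<rho>" "headed t"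
  moreover from \<open>renaming \<rho>\<close> have "crename \<pi> \<circ> \<rho> = \<rho>" by (auto simp: renaming_def)
  ultimately show ?thesis by (simp add: hrename_subst)
qed

lemma mgu_hrename:
  assumes "headed a" "headed b" "bij \<pi>" "is_mgu \<theta> a b"
  shows "is_mgu (crename \<pi> \<circ> \<theta>) (hrename \<pi> a) (hrename \<pi> b)"
  unfolding is_mgu_def
proof (intro conjI allI impI)
  show "subst (crename \<pi> \<circ> \<theta>) (hrename \<pi> a) = subst (crename \<pi> \<circ> \<theta>) (hrename \<pi> b)"
    using assms by (metis hrename_subst is_mgu_def)
next
  fix \<sigma> assume unif: "subst \<sigma> (hrename \<pi> a) = subst \<sigma> (hrename \<pi> b)"
  have unrenamed: "hrename (inv \<pi>) (subst \<sigma> (hrename \<pi> t)) = subst (crename (inv \<pi>) \<circ> \<sigma>) t"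
    if "headed t" for t
    using assms(3) that by (simp add: hrename_subst hrename_inv)
  have "subst (crename (inv \<pi>) \<circ> \<sigma>) a = subst (crename (inv \<pi>) \<circ> \<sigma>) b"
    using unrenamed[OF assms(1)] unrenamed[OF assms(2)] unif by simp
  then obtain \<delta> where \<delta>: "\<And>x. crename (inv \<pi>) (\<sigma> x) = subst \<delta> (\<theta> x)"
    using assms(4) unfolding is_mgu_def by fastforce
  have "\<sigma> x = subst (crename \<pi> \<circ> \<delta>) ((crename \<pi> \<circ> \<theta>) x)" for x
  proof -
    have "\<sigma> x = crename \<pi> (crename (inv \<pi>) (\<sigma> x))" using assms(3) by (simp add: crename_inv)
    also have "\<dots> = crename \<pi> (subst \<delta> (\<theta> x))" using \<delta> by simp
    finally show ?thesis by (simp add: crename_subst)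
  qed
  then show "\<exists>\<delta>. \<forall>x. \<sigma> x = subst \<delta> ((crename \<pi> \<circ> \<theta>) x)" by blast
qed

definition flow_rename :: "(cnst \<Rightarrow> cnst) \<Rightarrow> (trm \<times> trm) set \<Rightarrow> (trm \<times> trm) set" where
  "flow_rename \<pi> f = (\<lambda>(a, b). (hrename \<pi> a, hrename \<pi> b)) ` f"

definition headed_flow :: "(trm \<times> trm) set \<Rightarrow> bool" where
  "headed_flow f \<longleftrightarrow> (\<forall>(a, b)\<in>f. headed a \<and> headed b)"

lemma headed_flow_rename: "headed_flow f \<Longrightarrow> headed_flow (flow_rename \<pi> f)"
  by (auto simp: headed_flow_def flow_rename_def)

lemma headed_flow_prod: "headed_flow f \<Longrightarrow> headed_flow g \<Longrightarrow> headed_flow (flow_prod f g)"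
  by (fastforce simp: headed_flow_def flow_prod_def)

lemma flow_rename_inv:
  assumes "bij \<pi>"
  shows "flow_rename (inv \<pi>) (flow_rename \<pi> f) = f" "flow_rename \<pi> (flow_rename (inv \<pi>) f) = f"
  using assms by (force simp: flow_rename_def image_image hrename_inv)+

lemma flow_rename_empty_iff [simp]: "flow_rename \<pi> f = {} \<longleftrightarrow> f = {}"
  by (simp add: flow_rename_def)

lemma flow_rename_class:
  assumes "headed a" "headed b"
  shows "flow_rename \<pi> (flow_class a b) = flow_class (hrename \<pi> a) (hrename \<pi> b)"
  using assms unfolding flow_rename_def flow_class_def
  by (auto simp: hrename_subst_renaming image_iff) (metis hrename_subst_renaming)

lemma headed_flow_class: "headed a \<Longrightarrow> headed b \<Longrightarrow> headed_flow (flow_class a b)"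
  by (auto simp: headed_flow_def flow_class_def)

text \<open>Half of the compatibility with products; the other half follows by applying it
  to the inverse renaming.\<close>
lemma flow_rename_prod_subset:
  assumes "headed_flow f" "headed_flow g" "bij \<pi>"
  shows "flow_rename \<pi> (flow_prod f g) \<subseteq> flow_prod (flow_rename \<pi> f) (flow_rename \<pi> g)"
proof
  fix e assume "e \<in> flow_rename \<pi> (flow_prod f g)"
  then obtain u v t w \<theta> where e: "e = (hrename \<pi> (subst \<theta> u), hrename \<pi> (subst \<theta> w))"
    and m: "(u, v) \<in> f" "(t, w) \<in> g" "(vars u \<union> vars v) \<inter> (vars t \<union> vars w) = {}" "is_mgu \<theta> v t"
    unfolding flow_rename_def flow_prod_def by auto
  have hd: "headed u" "headed v" "headed t" "headed w"
    using m assms unfolding headed_flow_def by auto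
  have "e = (subst (crename \<pi> \<circ> \<theta>) (hrename \<pi> u), subst (crename \<pi> \<circ> \<theta>) (hrename \<pi> w))"
    using e hd by (simp add: hrename_subst)
  moreover have "(hrename \<pi> u, hrename \<pi> v) \<in> flow_rename \<pi> f" "(hrename \<pi> t, hrename \<pi> w) \<in> flow_rename \<pi> g"
    using m unfolding flow_rename_def by force+
  moreover have "(vars (hrename \<pi> u) \<union> vars (hrename \<pi> v)) \<inter> (vars (hrename \<pi> t) \<union> vars (hrename \<pi> w)) = {}"
    using m hd by simp
  moreover have "is_mgu (crename \<pi> \<circ> \<theta>) (hrename \<pi> v) (hrename \<pi> t)"
    using mgu_hrename hd m assms by blast
  ultimately show "e \<in> flow_prod (flow_rename \<pi> f) (flow_rename \<pi> g)"
    unfolding flow_prod_def by blast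
qed

lemma flow_rename_prod:
  assumes "headed_flow f" "headed_flow g" "bij \<pi>"
  shows "flow_prod (flow_rename \<pi> f) (flow_rename \<pi> g) = flow_rename \<pi> (flow_prod f g)"
proof
  show "flow_rename \<pi> (flow_prod f g) \<subseteq> flow_prod (flow_rename \<pi> f) (flow_rename \<pi> g)"
    using flow_rename_prod_subset assms .
  have "flow_rename (inv \<pi>) (flow_prod (flow_rename \<pi> f) (flow_rename \<pi> g))
        \<subseteq> flow_prod (flow_rename (inv \<pi>) (flow_rename \<pi> f)) (flow_rename (inv \<pi>) (flow_rename \<pi> g))"
    using assms by (intro flow_rename_prod_subset headed_flow_rename) (simp_all add: bij_imp_bij_inv)
  also have "\<dots> = flow_prod f g" using assms(3) by (simp add: flow_rename_inv)
  finally have "flow_rename \<pi> (flow_rename (inv \<pi>) (flow_prod (flow_rename \<pi> f) (flow_rename \<pi> g)))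
                \<subseteq> flow_rename \<pi> (flow_prod f g)"
    unfolding flow_rename_def by blast
  then show "flow_prod (flow_rename \<pi> f) (flow_rename \<pi> g) \<subseteq> flow_rename \<pi> (flow_prod f g)"
    using assms(3) by (simp add: flow_rename_inv)
qed

definition wiring_rename :: "(cnst \<Rightarrow> cnst) \<Rightarrow> (trm \<times> trm) set set \<Rightarrow> (trm \<times> trm) set set" where
  "wiring_rename \<pi> F = flow_rename \<pi> ` F"

definition headed_wiring :: "(trm \<times> trm) set set \<Rightarrow> bool" where
  "headed_wiring F \<longleftrightarrow> (\<forall>f\<in>F. headed_flow f)"

lemma headed_wiring_prod: "headed_wiring F \<Longrightarrow> headed_wiring G \<Longrightarrow> headed_wiring (wprod F G)"
  by (auto simp: headed_wiring_def wprod_def headed_flow_prod)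

lemma wiring_rename_prod:
  assumes "headed_wiring F" "headed_wiring G" "bij \<pi>"
  shows "wprod (wiring_rename \<pi> F) (wiring_rename \<pi> G) = wiring_rename \<pi> (wprod F G)"
proof -
  have prod: "flow_prod (flow_rename \<pi> f) (flow_rename \<pi> g) = flow_rename \<pi> (flow_prod f g)"
    if "f \<in> F" "g \<in> G" for f g
    using assms that flow_rename_prod unfolding headed_wiring_def by blast
  show ?thesis
  proof
    show "wprod (wiring_rename \<pi> F) (wiring_rename \<pi> G) \<subseteq> wiring_rename \<pi> (wprod F G)"
    proof
      fix h assume "h \<in> wprod (wiring_rename \<pi> F) (wiring_rename \<pi> G)"
      then obtain f g where fg: "f \<in> F" "g \<in> G" "h = flow_prod (flow_rename \<pi> f) (flow_rename \<pi> g)" "h \<noteq> {}"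
        unfolding wprod_def wiring_rename_def by blast
      then have "h = flow_rename \<pi> (flow_prod f g)" "flow_prod f g \<noteq> {}" using prod by auto
      then show "h \<in> wiring_rename \<pi> (wprod F G)" using fg unfolding wprod_def wiring_rename_def by blast
    qed
    show "wiring_rename \<pi> (wprod F G) \<subseteq> wprod (wiring_rename \<pi> F) (wiring_rename \<pi> G)"
    proof
      fix h assume "h \<in> wiring_rename \<pi> (wprod F G)"
      then obtain f g where fg: "f \<in> F" "g \<in> G" "h = flow_rename \<pi> (flow_prod f g)" "flow_prod f g \<noteq> {}"
        unfolding wprod_def wiring_rename_def by blast
      then have "h = flow_prod (flow_rename \<pi> f) (flow_rename \<pi> g)" "h \<noteq> {}" using prod by auto
      then show "h \<in> wprod (wiring_rename \<pi> F) (wiring_rename \<pi> G)" using fg unfolding wprod_def wiring_rename_def by blast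
    qed
  qed
qed

lemma wiring_rename_pow:
  assumes "headed_wiring F" "bij \<pi>"
  shows "wpow (wiring_rename \<pi> F) (Suc n) = wiring_rename \<pi> (wpow F (Suc n))
         \<and> headed_wiring (wpow F (Suc n))"
proof (induction n)
  case 0
  then show ?case using assms by simp
next
  case (Suc n)
  then show ?case
    using assms by (simp del: wpow.simps add: wpow.simps(3) wiring_rename_prod headed_wiring_prod)
qed

text \<open>Hence nilpotency is preserved (the 0-th power is never empty).\<close>
lemma nilpotent_wiring_rename:
  assumes "headed_wiring F" "bij \<pi>" "nilpotent F"
  shows "nilpotent (wiring_rename \<pi> F)"
proof -
  obtain n where n: "wpow F n = {}" using assms(3) unfolding nilpotent_def by blast
  then obtain m where m: "n = Suc m" by (cases n) auto
  have "wpow (wiring_rename \<pi> F) (Suc m) = {}"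
    using wiring_rename_pow[OF assms(1,2), of m] n m by (simp add: wiring_rename_def)
  then show ?thesis unfolding nilpotent_def by blast
qed

section \<open>Action on word representations and on observations\<close>

lemma wiring_rename_wordrep:
  assumes "p \<noteq> []" "\<pi> CL = CL" "\<pi> CR = CR"
  shows "wiring_rename \<pi> (wordrep W p) = wordrep W (map \<pi> p) \<and> headed_wiring (wordrep W p)"
proof -
  have pos: "\<pi> (pos p i) = pos (map \<pi> p) i" for i
    using assms(1) by (auto simp: pos_def)
  show ?thesis
    unfolding wiring_rename_def wordrep_def headed_wiring_def Let_def
    by (simp add: image_UN flow_rename_class headed_def headed_flow_class hrename_def pos Mt_def assms(2,3))
qed

definition position_free :: "(trm \<times> trm) set set \<Rightarrow> bool" where
  "position_free F \<longleftrightarrow> (\<forall>f\<in>F. \<forall>(a, b)\<in>f. constsof a \<inter> Pconsts = {} \<and> constsof b \<inter> Pconsts = {})"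

lemma stensor_elem:
  assumes "X \<in> stensor A B" "f \<in> X"
  shows "\<exists>F\<in>A. \<exists>G\<in>B. \<exists>f1\<in>F. \<exists>f2\<in>G. f = ftensor f1 f2"
proof -
  obtain xs where "X = \<Union> (set (map (\<lambda>(F, G). wtensor F G) xs))" "set xs \<subseteq> A \<times> B"
    using assms(1) unfolding stensor_def by blast
  then show ?thesis using assms(2) unfolding wtensor_def by fastforce
qed

lemma position_free_stensor:
  assumes "\<forall>F\<in>A. position_free F" "\<forall>G\<in>B. position_free G" "X \<in> stensor A B"
  shows "position_free X"
  unfolding position_free_def
proof (intro ballI)
  fix f p assume f: "f \<in> X" and p: "p \<in> f"
  obtain F G f1 f2 where "F \<in> A" "G \<in> B" "f1 \<in> F" "f2 \<in> G" "f = ftensor f1 f2"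
    using stensor_elem[OF assms(3) f] by blast
  then show "case p of (a, b) \<Rightarrow> constsof a \<inter> Pconsts = {} \<and> constsof b \<inter> Pconsts = {}"
    using p assms(1,2) unfolding ftensor_def position_free_def by fastforce
qed

lemma Cw_elem:
  assumes "F \<in> Cw (Const ` S)" "f \<in> F" "(a, b) \<in> f"
  shows "\<exists>c c'. c \<in> S \<and> c' \<in> S \<and> a = Const c \<and> b = Const c'"
  using assms unfolding Cw_def flow_class_def by auto

lemma position_free_Cw:
  assumes "S \<inter> Pconsts = {}" "F \<in> Cw (Const ` S)"
  shows "position_free F"
  unfolding position_free_def using assms Cw_elem by fastforce

lemma position_free_Rsym: "F \<in> Rsym Pconsts A \<Longrightarrow> position_free F"
  unfolding position_free_def Rsym_def by fastforce

lemma Pconsts_disjoint: "Sconsts \<inter> Pconsts = {}" "{CL, CR} \<inter> Pconsts = {}"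
  by (auto simp: Sconsts_def Pconsts_def)

lemma observation_rep_shape:
  assumes "Ob \<in> Matr \<Sigma> Obs" "f \<in> Ob" "(a, b) \<in> f"
  shows "\<exists>c t c' w. a = Dot (Const c) t \<and> b = Dot (Const c') w \<and>
     constsof t \<inter> Pconsts = {} \<and> constsof w \<inter> Pconsts = {}"
proof -
  have obs: "\<forall>G\<in>Obs. position_free G"
    unfolding Obs_def
    using position_free_stensor position_free_Cw[OF Pconsts_disjoint(1)] position_free_Rsym by blast
  have lr: "\<forall>G\<in>stensor (Cw (Const ` {CL, CR})) Obs. position_free G"
    using position_free_stensor[OF _ obs] position_free_Cw[OF Pconsts_disjoint(2)] by blast
  obtain F G f1 f2 where FG: "F \<in> Cw (Const ` (\<Sigma> \<union> {Star}))"
    "G \<in> stensor (Cw (Const ` {CL, CR})) Obs" "f1 \<in> F" "f2 \<in> G" "f = ftensor f1 f2"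
    using stensor_elem[OF assms(1)[unfolded Matr_def] assms(2)] by blast
  then obtain u v t w where "(u, v) \<in> f1" "(t, w) \<in> f2" "a = Dot u t" "b = Dot v w"
    using assms(3) unfolding ftensor_def by blast
  then show ?thesis using Cw_elem[OF FG(1,3)] lr FG(2,4) unfolding position_free_def by fastforce
qed

lemma wiring_rename_observation:
  assumes "Ob \<in> Matr \<Sigma> Obs" "\<And>c. c \<notin> Pconsts \<Longrightarrow> \<pi> c = c"
  shows "wiring_rename \<pi> Ob = Ob \<and> headed_wiring Ob"
proof -
  have rep: "hrename \<pi> a = a \<and> hrename \<pi> b = b \<and> headed a \<and> headed b"
    if f: "f \<in> Ob" and ab: "(a, b) \<in> f" for f a b
  proof -
    obtain c t c' w where "a = Dot (Const c) t" "b = Dot (Const c') w"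
      "constsof t \<inter> Pconsts = {}" "constsof w \<inter> Pconsts = {}"
      using observation_rep_shape[OF assms(1) f ab] by blast
    then show ?thesis
      using assms(2) by (auto simp: hrename_def headed_def intro!: crename_fixed)
  qed
  have "flow_rename \<pi> f = f \<and> headed_flow f" if "f \<in> Ob" for f
    unfolding flow_rename_def headed_flow_def using rep[OF that] by (force simp: image_iff)
  then show ?thesis unfolding wiring_rename_def headed_wiring_def by simp
qed

lemma nilpotent_permute_positions:
  assumes "Ob \<in> Matr \<Sigma> Obs" "bij \<pi>" "\<And>c. c \<notin> Pconsts \<Longrightarrow> \<pi> c = c" "p \<noteq> []"
    "nilpotent (wprod Ob (wordrep W p))"
  shows "nilpotent (wprod Ob (wordrep W (map \<pi> p)))"
proof -
  have "\<pi> CL = CL" "\<pi> CR = CR" using assms(3) Pconsts_disjoint(2) by auto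
  note ob = wiring_rename_observation[OF assms(1,3)]
    and wr = wiring_rename_wordrep[OF assms(4) this]
  have "nilpotent (wiring_rename \<pi> (wprod Ob (wordrep W p)))"
    using nilpotent_wiring_rename headed_wiring_prod ob wr assms(2,5) by blast
  then show ?thesis using wiring_rename_prod[of Ob "wordrep W p" \<pi>] ob wr assms(2) by simp
qed

section \<open>Permutations relating two tuples\<close>

lemma permutation_mapping_list:
  assumes "distinct p" "distinct q" "length p = length q" "set p \<subseteq> A" "set q \<subseteq> A"
  shows "\<exists>\<pi>. bij \<pi> \<and> (\<forall>c. c \<notin> A \<longrightarrow> \<pi> c = c) \<and> map \<pi> p = q"
  using assms
proof (induction p arbitrary: q)
  case Nil
  then show ?case by (intro exI[of _ id]) (auto simp: id_def[symmetric])
next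
  case (Cons a p')
  then obtain b q' where q: "q = b # q'" by (cases q) auto
  with Cons.prems obtain \<pi> where \<pi>: "bij \<pi>" "\<forall>c. c \<notin> A \<longrightarrow> \<pi> c = c" "map \<pi> p' = q'"
    using Cons.IH[of q'] by auto
  text \<open>Correct the image of a by a transposition, which does not disturb the rest.\<close>
  define \<sigma> where "\<sigma> = Transposition.transpose (\<pi> a) b \<circ> \<pi>"
  have inj: "inj \<pi>" using \<pi>(1) bij_is_inj by blast
  have "\<sigma> c = c" if "c \<notin> A" for c
  proof -
    have "\<pi> c = c" "c \<noteq> b" "a \<noteq> c" using \<pi>(2) that q Cons.prems by auto
    then have "\<pi> a \<noteq> c" using inj by (metis injD)
    then show ?thesis using \<open>\<pi> c = c\<close> \<open>c \<noteq> b\<close> by (simp add: \<sigma>_def)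
  qed
  moreover have "map \<sigma> p' = q'"
  proof -
    have "\<sigma> x = \<pi> x" if "x \<in> set p'" for x
    proof -
      have "\<pi> x \<in> set q'" using that \<pi>(3) by auto
      then have "\<pi> x \<noteq> b" using Cons.prems q by auto
      moreover have "\<pi> x \<noteq> \<pi> a" using that Cons.prems inj by (auto dest: injD)
      ultimately show ?thesis by (simp add: \<sigma>_def)
    qed
    then show ?thesis using \<pi>(3) by (metis map_eq_conv)
  qed
  moreover have "\<sigma> a = b" by (simp add: \<sigma>_def)
  moreover have "bij \<sigma>" using \<pi>(1) by (simp add: \<sigma>_def bij_comp)
  ultimately show ?case using q by (intro exI[of _ \<sigma>]) simp
qed

lemma nilpotent_any_positions:
  assumes "Ob \<in> Matr \<Sigma> Obs" "p \<noteq> []" "length p = length q"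
    "distinct p" "set p \<subseteq> Pconsts" "distinct q" "set q \<subseteq> Pconsts"
    "nilpotent (wprod Ob (wordrep W p))"
  shows "nilpotent (wprod Ob (wordrep W q))"
proof -
  obtain \<pi> where "bij \<pi>" "\<forall>c. c \<notin> Pconsts \<longrightarrow> \<pi> c = c" "map \<pi> p = q"
    using permutation_mapping_list[OF assms(4,6,3,5,7)] by blast
  then show ?thesis using nilpotent_permute_positions[OF assms(1) _ _ assms(2,8)] by blast
qed

theorem mainTheorem10:
  fixes \<Sigma> :: "cnst set" and Ob :: "(trm \<times> trm) set set"
  assumes "Star \<notin> \<Sigma>"
    and "Ob \<in> Matr \<Sigma> Obs"
  shows "lang \<Sigma> Ob = {W. set W \<subseteq> \<Sigma> \<and>
     (\<exists>p. length p = length W + 1 \<and> distinct p \<and> set p \<subseteq> Pconsts \<and> nilpotent (wprod Ob (wordrep W p)))}"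
proof (intro set_eqI iffI)
  fix W assume "W \<in> lang \<Sigma> Ob"
  moreover have "length (map CP [0..<length W + 1]) = length W + 1"
    "distinct (map CP [0..<length W + 1])" "set (map CP [0..<length W + 1]) \<subseteq> Pconsts"
    by (auto simp: Pconsts_def distinct_map inj_on_def)
  ultimately show "W \<in> {W. set W \<subseteq> \<Sigma> \<and> (\<exists>p. length p = length W + 1 \<and> distinct p
      \<and> set p \<subseteq> Pconsts \<and> nilpotent (wprod Ob (wordrep W p)))}"
    unfolding lang_def by blast
next
  fix W assume "W \<in> {W. set W \<subseteq> \<Sigma> \<and> (\<exists>p. length p = length W + 1 \<and> distinct p
      \<and> set p \<subseteq> Pconsts \<and> nilpotent (wprod Ob (wordrep W p)))}"
  then obtain p where W: "set W \<subseteq> \<Sigma>" and p: "length p = length W + 1" "distinct p"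
    "set p \<subseteq> Pconsts" "nilpotent (wprod Ob (wordrep W p))" by blast
  have "nilpotent (wprod Ob (wordrep W q))"
    if "length q = length W + 1 \<and> distinct q \<and> set q \<subseteq> Pconsts" for q
  proof -
    have "p \<noteq> []" "length p = length q" using p(1) that by auto
    then show ?thesis using nilpotent_any_positions[OF assms(2) _ _ p(2,3) _ _ p(4)] that by blast
  qed
  with W show "W \<in> lang \<Sigma> Ob" unfolding lang_def by blast
qed

end
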